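(* Let $q$ be an odd prime power, $\lambda$ a divisor of $q+1$ with $2\le\lambda<q+1$, $m=2t+1\ge5$, and $n=\frac{q^m+1}{\lambda}$. If $t$ is even, the smallest positive integer $i$ with $i\not\equiv0\pmod q$ that is not a coset leader modulo $n$ is $\frac{q^{t+1}+1}{\lambda}-\lfloor\frac q\lambda\rfloor$. If $t$ is odd, the smallest such $i$ is $\frac{q^{t+1}-1}{\lambda}-\lfloor\frac{q-2}{\lambda}\rfloor$.
   Context: For $0\le s\le n-1$, $C_s=\{sq^i\bmod n:i\ge0\}$ is the $q$-cyclotomic coset of $s$ modulo $n$; its least element is its coset leader. *)

theory Defs
  imports "HOL-Computational_Algebra.Primes"
begin

definition cyc_coset :: "nat \<Rightarrow> nat \<Rightarrow> nat \<Rightarrow> nat set" where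
  "cyc_coset q n s = {(s * q ^ i) mod n | i. True}"

definition coset_leader :: "nat \<Rightarrow> nat \<Rightarrow> nat \<Rightarrow> bool" where
  "coset_leader q n s \<longleftrightarrow> s < n \<and> s = Min (cyc_coset q n s)"

definition prime_power :: "nat \<Rightarrow> bool" where
  "prime_power q \<longleftrightarrow> (\<exists>p k. prime p \<and> k \<ge> 1 \<and> q = p ^ k)"

definition is_least_elem :: "nat set \<Rightarrow> nat \<Rightarrow> bool" where
  "is_least_elem S x \<longleftrightarrow> x \<in> S \<and> (\<forall>y\<in>S. x \<le> y)"

end

theory Submission
  imports Defs "HOL-Number_Theory.Cong"
begin

(*
  Put N = q^m + 1 = lam * n. Since q^m = -1 (mod N), every element of the q-cyclotomic
  coset of a modulo N is +a q^e or -a q^e modulo N for some e < m, and the coset of i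
  modulo n is the coset of lam * i modulo N divided by lam. For m = 2t + 1 this gives:
  a is a coset leader if a (q^t + 1) < N and q does not divide a, and a is not one if
  a q^t < N < a (q^t + 1), as a q^(m+t) = N - a q^t (mod N). So every i with
  lam * i <= q^(t+1) - q and q not dividing i is a leader, whereas the least i with
  lam * i > q^(t+1) - q is a non-leader prime to q. The floors in the statement
  compute exactly this i: lam * i = q^(t+1) - q + c with 0 < c <= lam.
*)

lemma mult_power_mod_power_plus_one:
  fixes q m x :: nat
  assumes "0 < x" "x \<le> q ^ m"
  shows "x * q ^ m mod (q ^ m + 1) = q ^ m + 1 - x"
proof -
  have "x * q ^ m = (x - 1) * (q ^ m + 1) + (q ^ m + 1 - x)"
    using assms by (cases x) (auto simp: algebra_simps)
  then show ?thesis
    using assms by (simp only: mod_mult_self3) simp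
qed

lemma power_cong_power_mod:
  fixes q p j N :: nat
  assumes "[q ^ p = 1] (mod N)"
  shows "[q ^ j = q ^ (j mod p)] (mod N)"
proof -
  have "q ^ j = (q ^ p) ^ (j div p) * q ^ (j mod p)"
    by (simp flip: power_mult power_add)
  also have "[\<dots> = 1 ^ (j div p) * q ^ (j mod p)] (mod N)"
    using assms by (intro cong_mult cong_pow) simp_all
  finally show ?thesis
    by simp
qed

lemma mult_power_mod_cases:
  fixes q m j y :: nat
  assumes "0 < q" "0 < m"
  obtains e where "e < m"
    and "y * q ^ j mod (q ^ m + 1) = y * q ^ e mod (q ^ m + 1)
      \<or> y * q ^ j mod (q ^ m + 1) = y * q ^ e * q ^ m mod (q ^ m + 1)"
proof -
  have "q ^ (2 * m) = q ^ m * q ^ m"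
    by (simp add: mult_2 power_add)
  also have "\<dots> mod (q ^ m + 1) = 1"
    using mult_power_mod_power_plus_one[of "q ^ m" q m] assms by simp
  finally have "[q ^ j = q ^ (j mod (2 * m))] (mod q ^ m + 1)"
    using assms by (intro power_cong_power_mod) (simp add: cong_def)
  then have "y * q ^ j mod (q ^ m + 1) = y * q ^ (j mod (2 * m)) mod (q ^ m + 1)"
    unfolding cong_def by (metis mod_mult_right_eq)
  moreover have "j mod (2 * m) = m * (j div m mod 2) + j mod m"
    by (metis mod_mult2_eq mult.commute)
  moreover have "j div m mod 2 = 0 \<or> j div m mod 2 = 1"
    by auto
  ultimately show ?thesis
    using that[of "j mod m"] \<open>0 < m\<close> by (auto simp: power_add ac_simps)
qed

lemma le_of_mult_power_mod_eq:
  fixes q k t a x N :: nat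
  assumes "0 < q" "0 < k" "k \<le> t" "a * q ^ t + a < N" "\<not> q dvd a"
    and "x * q ^ k mod N = a \<or> x * q ^ k mod N = N - a"
  shows "a \<le> x"
proof (rule ccontr)
  assume "\<not> a \<le> x"
  have "x * q ^ k \<le> x * q ^ t"
    using assms(1,3) by (simp add: power_increasing)
  also have "\<dots> < a * q ^ t"
    using \<open>\<not> a \<le> x\<close> assms(1) by simp
  finally have "x * q ^ k < N - a"
    using assms(4) by simp
  with assms(6) have "x * q ^ k = a"
    by auto
  then show False
    using assms(2,5) by (metis dvd_mult dvd_power)
qed

lemma le_mult_power_mod:
  fixes q t a j :: nat
  defines "N \<equiv> q ^ (2 * t + 1) + 1"
  assumes "0 < q" "0 < a" "a * (q ^ t + 1) < N" "\<not> q dvd a"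
  shows "a \<le> a * q ^ j mod N"
proof -
  define m where "m = 2 * t + 1"
  have a_small: "a * q ^ e + a < N" if "e \<le> t" for e
  proof -
    have "a * q ^ e \<le> a * q ^ t"
      using that assms(2) by (simp add: power_increasing)
    moreover have "a * (q ^ t + 1) = a * q ^ t + a"
      by (simp add: algebra_simps)
    ultimately show ?thesis
      using assms(4) by linarith
  qed
  have a_reflect: "a * q ^ e * q ^ m mod N = N - a * q ^ e" if "e \<le> t" for e
    using a_small[OF that] assms(2,3) unfolding N_def m_def
    by (intro mult_power_mod_power_plus_one) auto
  obtain e where "e < m"
    and coset_cases: "a * q ^ j mod N = a * q ^ e mod N \<or> a * q ^ j mod N = a * q ^ e * q ^ m mod N"
    using mult_power_mod_cases[of q m a j] assms(2) unfolding N_def m_def by auto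
  show ?thesis
  proof (cases "e \<le> t")
    case True
    have "a \<le> a * q ^ e" "a * q ^ e mod N = a * q ^ e"
      using assms(2) a_small[OF True] by simp_all
    then show ?thesis
      using coset_cases a_small[OF True] a_reflect[OF True] by linarith
  next
    case False
    \<comment> \<open>times \<open>q ^ (m - e)\<close> the residue becomes \<open>\<plusminus>a\<close>, impossible if it is below \<open>a\<close>\<close>
    define k where "k = m - e"
    have "0 < k" "k \<le> t" and qm: "q ^ e * q ^ k = q ^ m"
      using False \<open>e < m\<close> unfolding k_def m_def by (auto simp flip: power_add)
    have reflect_once: "a * q ^ m mod N = N - a"
      using a_reflect[of 0] by simp
    have "a * q ^ m * q ^ m mod N = (N - a) * q ^ m mod N"
      using reflect_once by (metis mod_mult_left_eq)
    also have "\<dots> = N - (N - a)"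
      using assms(3) a_small[of 0] unfolding N_def m_def
      by (intro mult_power_mod_power_plus_one) auto
    finally have reflect_twice: "a * q ^ m * q ^ m mod N = a"
      using a_small[of 0] by simp
    have "a * q ^ j mod N * q ^ k mod N = a * q ^ e * q ^ k mod N
        \<or> a * q ^ j mod N * q ^ k mod N = a * q ^ e * q ^ m * q ^ k mod N"
      using coset_cases by (metis mod_mult_left_eq)
    moreover have "a * q ^ e * q ^ k = a * q ^ m" "a * q ^ e * q ^ m * q ^ k = a * q ^ m * q ^ m"
      by (simp_all add: qm[symmetric] ac_simps)
    ultimately have "a * q ^ j mod N * q ^ k mod N = a \<or> a * q ^ j mod N * q ^ k mod N = N - a"
      using reflect_once reflect_twice by auto
    then show ?thesis
      using le_of_mult_power_mod_eq \<open>0 < k\<close> \<open>k \<le> t\<close> a_small[of t] assms(2,5) by blast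
  qed
qed

lemma finite_cyc_coset: "0 < n \<Longrightarrow> finite (cyc_coset q n s)"
  by (rule finite_subset[of _ "{..<n}"]) (auto simp: cyc_coset_def)

lemma coset_leader_iff:
  "coset_leader q n s \<longleftrightarrow> s < n \<and> (\<forall>j. s \<le> s * q ^ j mod n)"
proof (cases "s < n")
  case True
  then have "s \<in> cyc_coset q n s"
    unfolding cyc_coset_def by (auto intro!: exI[of _ 0])
  then have "s = Min (cyc_coset q n s) \<longleftrightarrow> (\<forall>y\<in>cyc_coset q n s. s \<le> y)"
    using finite_cyc_coset[of n q s] True by (subst eq_Min_iff) auto
  also have "\<dots> \<longleftrightarrow> (\<forall>j. s \<le> s * q ^ j mod n)"
    unfolding cyc_coset_def by blast
  finally show ?thesis
    unfolding coset_leader_def using True by blast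
qed (simp add: coset_leader_def)

lemma coset_leader_if_mult_small:
  fixes q t lam n i :: nat
  assumes "0 < q" "lam * n = q ^ (2 * t + 1) + 1" "0 < i"
    and "lam * i * (q ^ t + 1) < lam * n" "\<not> q dvd lam * i"
  shows "coset_leader q n i"
proof -
  have "lam * i \<le> lam * i * (q ^ t + 1)"
    by simp
  with assms(4) have "i < n"
    by (meson le_less_trans mult_less_cancel1)
  have "0 < lam"
    using assms(5) by (cases lam) auto
  have "i \<le> i * q ^ j mod n" for j
  proof -
    have "lam * i \<le> lam * i * q ^ j mod (lam * n)"
      using assms \<open>0 < lam\<close> unfolding assms(2) by (intro le_mult_power_mod) auto
    also have "\<dots> = lam * (i * q ^ j mod n)"
      by (simp add: mult.assoc mod_mult_mult1)
    finally show ?thesis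
      using \<open>0 < lam\<close> by simp
  qed
  with \<open>i < n\<close> show ?thesis
    by (simp add: coset_leader_iff)
qed

lemma not_coset_leader_if_mult_large:
  fixes q t lam n i :: nat
  assumes "0 < q" "lam * n = q ^ (2 * t + 1) + 1"
    and "lam * i * q ^ t < lam * n" "lam * n < lam * i * (q ^ t + 1)"
  shows "\<not> coset_leader q n i"
proof -
  define m where "m = 2 * t + 1"
  have "0 < lam * i * q ^ t"
    using assms(1,4) by (cases "lam * i") auto
  then have "lam * i * q ^ t * q ^ m mod (lam * n) = lam * n - lam * i * q ^ t"
    using assms(3) unfolding assms(2) m_def by (intro mult_power_mod_power_plus_one) auto
  also have "\<dots> < lam * i"
    using assms(3,4) unfolding distrib_left mult_1_right by linarith
  finally have "lam * (i * q ^ (t + m) mod n) < lam * i"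
    by (simp add: mod_mult_mult1 power_add ac_simps)
  then show ?thesis
    by (auto simp: coset_leader_iff not_le intro!: exI[of _ "t + m"])
qed

lemma coset_leader_if_mult_le:
  fixes q t lam n i :: nat
  assumes "0 < q" "lam * n = q ^ (2 * t + 1) + 1" "0 < i"
    and "lam * i + q \<le> q ^ (t + 1)" "\<not> q dvd lam * i"
  shows "coset_leader q n i"
proof (rule coset_leader_if_mult_small[OF assms(1-3) _ assms(5)])
  define T where "T = q ^ t"
  have "(lam * i + q) * (T + 1) \<le> q * T * (T + 1)"
    using assms(4) unfolding T_def by (intro mult_le_mono1) simp
  moreover have "lam * n = q * T * T + 1"
    using assms(2) unfolding T_def by (simp add: power_add mult_2 mult.assoc)
  ultimately show "lam * i * (q ^ t + 1) < lam * n"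
    unfolding T_def[symmetric] by (simp add: algebra_simps)
qed

lemma not_coset_leader_if_mult_between:
  fixes q t lam n i :: nat
  assumes "2 \<le> q" "2 \<le> t" "lam * n = q ^ (2 * t + 1) + 1"
    and "q ^ (t + 1) < lam * i + q" "lam * i \<le> q ^ (t + 1)"
  shows "\<not> coset_leader q n i"
proof (rule not_coset_leader_if_mult_large[OF _ assms(3)])
  define T where "T = q ^ t"
  have "q * q \<le> T"
    using assms(1,2) power_increasing[of 2 t q] unfolding T_def by (simp add: power2_eq_square)
  moreover have "2 * q \<le> q * q"
    using assms(1) by (rule mult_le_mono1)
  ultimately have "q < T"
    using assms(1) by linarith
  have lam_n: "lam * n = q * T * T + 1"
    using assms(3) unfolding T_def by (simp add: power_add mult_2 mult.assoc)
  have "lam * i * T \<le> q * T * T"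
    using assms(5) unfolding T_def by (intro mult_le_mono1) simp
  then show "lam * i * q ^ t < lam * n"
    unfolding T_def[symmetric] using lam_n by linarith
  have "(q * T + 1) * (T + 1) \<le> (lam * i + q) * (T + 1)"
    using assms(4) unfolding T_def by (intro mult_le_mono1) simp
  then show "lam * n < lam * i * (q ^ t + 1)"
    unfolding T_def[symmetric] using lam_n \<open>q < T\<close> by (simp add: algebra_simps)
qed (use assms(1) in simp)

lemma least_non_coset_leader:
  fixes q t lam n D c :: nat
  assumes "2 \<le> q" "2 \<le> t" "coprime q lam" "lam < q"
    and "lam * n = q ^ (2 * t + 1) + 1"
    and "lam * D + q = q ^ (t + 1) + c" "0 < c" "c \<le> lam"
  shows "is_least_elem {i. 0 < i \<and> i < n \<and> \<not> q dvd i \<and> \<not> coset_leader q n i} D"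
proof -
  have "\<not> q dvd lam * D"
  proof
    assume "q dvd lam * D"
    then have "q dvd q ^ (t + 1) + c"
      unfolding assms(6)[symmetric] by simp
    then have "q dvd c"
      by (simp add: dvd_add_right_iff)
    with assms(4,7,8) show False
      by (auto dest: dvd_imp_le)
  qed
  have "q ^ (t + 1) \<le> q ^ (2 * t + 1)"
    using assms(1) by (intro power_increasing) auto
  then have "q ^ (t + 1) < lam * n"
    using assms(5) by linarith
  then have "lam * D < lam * n"
    using assms(4,6,8) by linarith
  then have "D < n"
    by simp
  moreover have "0 < D" "\<not> q dvd D"
    using \<open>\<not> q dvd lam * D\<close> by (auto intro: Nat.gr0I)
  moreover have "\<not> coset_leader q n D"
    using assms by (intro not_coset_leader_if_mult_between) auto
  moreover have "coset_leader q n y" if "0 < y" "y < D" "\<not> q dvd y" for y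
  proof (rule coset_leader_if_mult_le[OF _ assms(5) that(1)])
    have "lam * y + lam \<le> lam * D"
      using \<open>y < D\<close> mult_le_mono2[of "y + 1" D lam] by simp
    then show "lam * y + q \<le> q ^ (t + 1)"
      using assms(6,8) by linarith
    show "\<not> q dvd lam * y"
      using that(3) assms(3) by (simp add: coprime_dvd_mult_right_iff)
  qed (use assms(1) in simp)
  ultimately show ?thesis
    unfolding is_least_elem_def using not_less by blast
qed

lemma power_cong_neg_one_power:
  fixes lam q k :: nat
  assumes "lam dvd q + 1"
  shows "[int q ^ k = (-1) ^ k] (mod int lam)"
proof -
  have "int lam dvd int (q + 1)"
    using assms by (simp only: int_dvd_int_iff)
  also have "int (q + 1) = int q - (-1)"
    by simp
  finally have "[int q = -1] (mod int lam)"
    by (simp only: cong_iff_dvd_diff)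
  then show ?thesis
    by (rule cong_pow)
qed

lemma dvd_power_plus_one_if_odd:
  fixes lam q k :: nat
  assumes "lam dvd q + 1" "odd k"
  shows "lam dvd q ^ k + 1"
proof -
  have "int lam dvd int q ^ k - (-1)"
    using power_cong_neg_one_power[OF assms(1), of k] assms(2) by (simp only: cong_iff_dvd_diff) simp
  also have "int q ^ k - (-1) = int (q ^ k + 1)"
    by simp
  finally show ?thesis
    by (simp only: int_dvd_int_iff)
qed

lemma dvd_power_minus_one_if_even:
  fixes lam q k :: nat
  assumes "lam dvd q + 1" "even k"
  shows "lam dvd q ^ k - 1"
proof (cases "q = 0")
  case True
  then show ?thesis
    by (cases k) simp_all
next
  case False
  have "int lam dvd int q ^ k - 1"
    using power_cong_neg_one_power[OF assms(1), of k] assms(2) by (simp only: cong_iff_dvd_diff) simp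
  also have "int q ^ k - 1 = int (q ^ k - 1)"
    using False by (simp add: of_nat_diff)
  finally show ?thesis
    by (simp only: int_dvd_int_iff)
qed

lemma mult_div_diff_div:
  fixes lam A B :: nat
  assumes "lam dvd A" "B \<le> A"
  shows "lam * (A div lam - B div lam) + B = A + B mod lam"
proof -
  have "lam * (A div lam - B div lam) = A - (B - B mod lam)"
    using assms(1) by (simp add: right_diff_distrib' minus_mod_eq_mult_div)
  then show ?thesis
    using assms(2) by (simp add: le_diff_conv2)
qed

lemma least_non_coset_leader_div_diff:
  fixes q t lam n A B :: nat
  assumes "2 \<le> q" "2 \<le> t" "coprime q lam" "lam < q"
    and "lam * n = q ^ (2 * t + 1) + 1"
    and "lam dvd A" "A + q = q ^ (t + 1) + 1 + B"
  shows "is_least_elem {i. 0 < i \<and> i < n \<and> \<not> q dvd i \<and> \<not> coset_leader q n i}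
    (A div lam - B div lam)"
proof (rule least_non_coset_leader[OF assms(1-5)])
  have "q \<le> q ^ (t + 1)"
    using assms(1) power_increasing[of 1 "t + 1" q] by simp
  then have "B \<le> A"
    using assms(7) by linarith
  with assms(6) have "lam * (A div lam - B div lam) + B = A + B mod lam"
    by (rule mult_div_diff_div)
  then show "lam * (A div lam - B div lam) + q = q ^ (t + 1) + (1 + B mod lam)"
    using assms(7) by linarith
  have "0 < lam"
    using assms(5) by (cases lam) auto
  then show "1 + B mod lam \<le> lam"
    by (simp add: Suc_leI)
qed simp

theorem corollary1:
  fixes q lam m t n :: nat
  assumes "prime_power q" and "odd q"
    and "lam dvd (q + 1)" and "2 \<le> lam" and "lam < q + 1"
    and "m = 2 * t + 1" and "m \<ge> 5"
    and "n = (q ^ m + 1) div lam"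
  shows "(even t \<longrightarrow>
           is_least_elem {i. 0 < i \<and> i < n \<and> \<not> q dvd i \<and> \<not> coset_leader q n i}
             ((q ^ (t + 1) + 1) div lam - q div lam))
       \<and> (odd t \<longrightarrow>
           is_least_elem {i. 0 < i \<and> i < n \<and> \<not> q dvd i \<and> \<not> coset_leader q n i}
             ((q ^ (t + 1) - 1) div lam - (q - 2) div lam))"
proof -
  \<comment> \<open>only \<open>lam dvd q + 1\<close> and \<open>2 \<le> lam < q + 1\<close> are used: \<open>q\<close> need not be an odd prime power\<close>
  have "lam \<noteq> q"
    using assms(3,4) dvd_add_right_iff[of lam lam 1] by auto
  then have "lam < q" "2 \<le> q"
    using assms(4,5) by auto
  have "coprime q lam"
    using coprime_divisors[OF dvd_refl assms(3), of q] by simp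
  have "lam * n = q ^ (2 * t + 1) + 1"
    using dvd_power_plus_one_if_odd[OF assms(3), of m] assms(6,8) by simp
  have "2 \<le> t" "q \<le> q ^ (t + 1)"
    using assms(6,7) power_increasing[of 1 "t + 1" q] \<open>2 \<le> q\<close> by auto
  note least = least_non_coset_leader_div_diff[OF \<open>2 \<le> q\<close> \<open>2 \<le> t\<close> \<open>coprime q lam\<close>
      \<open>lam < q\<close> \<open>lam * n = _\<close>]
  show ?thesis
  proof (intro conjI impI)
    assume "even t"
    then have "lam dvd q ^ (t + 1) + 1"
      using dvd_power_plus_one_if_odd[OF assms(3), of "t + 1"] by simp
    then show "is_least_elem {i. 0 < i \<and> i < n \<and> \<not> q dvd i \<and> \<not> coset_leader q n i}
        ((q ^ (t + 1) + 1) div lam - q div lam)"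
      by (rule least) simp
  next
    assume "odd t"
    then have "lam dvd q ^ (t + 1) - 1"
      using dvd_power_minus_one_if_even[OF assms(3), of "t + 1"] by simp
    then show "is_least_elem {i. 0 < i \<and> i < n \<and> \<not> q dvd i \<and> \<not> coset_leader q n i}
        ((q ^ (t + 1) - 1) div lam - (q - 2) div lam)"
      by (rule least) (use \<open>2 \<le> q\<close> \<open>q \<le> q ^ (t + 1)\<close> in linarith)
  qed
qed

end
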